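(* Let $N\ge1$ and $q$ be integers with $0\le q<\frac N2$. Let $d:[0,\infty)\to\mathbb{R}$, let $\nu_1,\dots,\nu_N:[0,\infty)\to\mathbb{R}$ be bounded, and let $\eta:[0,\infty)\to\mathbb{R}^N$ be arbitrary (unbounded allowed) such that for every $t\ge0$ there is a set $W(t)\subseteq\{1,\dots,N\}$ with $\operatorname{supp}(\eta(t))\subseteq W(t)$ and $\operatorname{card}(W(t))\le q$ (the set $W(t)$ is unknown and may vary with $t$). Let $D_j(t)=d(t)+\nu_j(t)+\eta_j(t)$. For every $J\subseteq\{1,\dots,N\}$ with $\operatorname{card}(J)=N-q$ define $$\hat d_J(t)=\frac{1}{N-q}\sum_{j\in J}D_j(t),\qquad \pi_J(t)=\max_{j\in J}|\hat d_J(t)-D_j(t)|,$$ and let $\sigma(t)$ be any subset $J$ with $\operatorname{card}(J)=N-q$ minimizing $\pi_J(t)$. Then the fused estimate $\hat d(t)=\hat d_{\sigma(t)}(t)$ satisfies, for all $t\ge0$, $$|\hat d(t)-d(t)|\le 3\|\nu\|_\infty .$$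
   Context: For $v\in\mathbb{R}^N$, $\operatorname{supp}(v)=\{i: v_i\ne0\}$. $\|\nu_j\|_\infty=\sup_{t\ge0}|\nu_j(t)|$ and $\|\nu\|_\infty=\max_{j}\|\nu_j\|_\infty$; these bounds are not assumed known to the estimator. *)

theory Defs
  imports "HOL-Analysis.Analysis"
begin

text \<open>Sensors are indexed by j in {1..N}; nu j t is the bounded noise of sensor j,
  eta t j the j-th component of the sparse (attack) vector eta(t).\<close>

definition meas :: "(real \<Rightarrow> real) \<Rightarrow> (nat \<Rightarrow> real \<Rightarrow> real) \<Rightarrow> (real \<Rightarrow> nat \<Rightarrow> real) \<Rightarrow> nat \<Rightarrow> real \<Rightarrow> real" where
  "meas d nu eta j t = d t + nu j t + eta t j"

definition dhat :: "nat \<Rightarrow> nat \<Rightarrow> (nat \<Rightarrow> real \<Rightarrow> real) \<Rightarrow> nat set \<Rightarrow> real \<Rightarrow> real" where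
  "dhat N q D J t = (1 / real (N - q)) * (\<Sum>j\<in>J. D j t)"

definition piJ :: "nat \<Rightarrow> nat \<Rightarrow> (nat \<Rightarrow> real \<Rightarrow> real) \<Rightarrow> nat set \<Rightarrow> real \<Rightarrow> real" where
  "piJ N q D J t = Max ((\<lambda>j. \<bar>dhat N q D J t - D j t\<bar>) ` J)"

definition supp_vec :: "nat \<Rightarrow> (nat \<Rightarrow> real) \<Rightarrow> nat set" where
  "supp_vec N v = {i \<in> {1..N}. v i \<noteq> 0}"

definition nu_norm :: "nat \<Rightarrow> (nat \<Rightarrow> real \<Rightarrow> real) \<Rightarrow> real" where
  "nu_norm N nu = Max ((\<lambda>j. SUP t\<in>{0..}. \<bar>nu j t\<bar>) ` {1..N})"

end

theory Submission
  imports Defs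
begin

text \<open>Outside the unknown attacked set W(t) the measurements are within \<parallel>\<nu>\<parallel> of d(t).
  Since card W(t) \<le> q, some admissible J avoids W(t); its average, and hence every
  residual \<pi>(J), is within 2\<parallel>\<nu>\<parallel>, so the minimiser \<sigma>(t) also has \<pi>(\<sigma>(t)) \<le> 2\<parallel>\<nu>\<parallel>.
  As 2q < N, \<sigma>(t) contains an unattacked sensor j, and the triangle inequality through
  D(j,t) gives the bound 3\<parallel>\<nu>\<parallel>.\<close>

lemma abs_le_nu_norm:
  assumes "bounded ((\<lambda>t. nu j t) ` {0..})" "j \<in> {1..N}" "t \<ge> 0"
  shows "\<bar>nu j t\<bar> \<le> nu_norm N nu"
proof -
  obtain B where "\<forall>x\<in>(\<lambda>t. nu j t) ` {0..}. \<bar>x\<bar> \<le> B"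
    using assms(1) bounded_real by blast
  then have "bdd_above ((\<lambda>t. \<bar>nu j t\<bar>) ` {0..})"
    by (auto intro!: bdd_aboveI[where M = B])
  then have "\<bar>nu j t\<bar> \<le> (SUP t\<in>{0..}. \<bar>nu j t\<bar>)"
    using assms(3) by (intro cSUP_upper) auto
  also have "\<dots> \<le> nu_norm N nu"
    unfolding nu_norm_def using assms(2) by (intro Max_ge) auto
  finally show ?thesis .
qed

lemma abs_mean_le:
  fixes e :: "'a \<Rightarrow> real"
  assumes "card J = n" "n > 0" "\<forall>i\<in>J. \<bar>e i\<bar> \<le> M"
  shows "\<bar>(1 / real n) * (\<Sum>i\<in>J. e i)\<bar> \<le> M"
proof -
  have "\<bar>\<Sum>i\<in>J. e i\<bar> \<le> (\<Sum>i\<in>J. \<bar>e i\<bar>)" by (rule sum_abs)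
  also have "\<dots> \<le> (\<Sum>i\<in>J. M)" using assms(3) by (intro sum_mono) auto
  also have "\<dots> = real n * M" using assms(1) by simp
  finally show ?thesis using assms(2) by (simp add: abs_mult field_simps)
qed

lemma abs_dhat_sub_le:
  assumes "card J = N - q" "N - q > 0" "\<forall>j\<in>J. \<bar>D j t - c\<bar> \<le> M"
  shows "\<bar>dhat N q D J t - c\<bar> \<le> M"
proof -
  have "dhat N q D J t - c = (1 / real (N - q)) * (\<Sum>j\<in>J. D j t - c)"
    using assms(1,2) by (simp add: dhat_def sum_subtractf field_simps)
  then show ?thesis using abs_mean_le[OF assms] by simp
qed

lemma abs_dhat_sub_le_piJ:
  assumes "finite J" "j \<in> J"
  shows "\<bar>dhat N q D J t - D j t\<bar> \<le> piJ N q D J t"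
  unfolding piJ_def using assms by (intro Max_ge) auto

lemma piJ_le_twice:
  assumes "card J = N - q" "N - q > 0" "\<forall>j\<in>J. \<bar>D j t - c\<bar> \<le> M"
  shows "piJ N q D J t \<le> 2 * M"
proof -
  have "J \<noteq> {}" "finite J" using assms(1,2) card_gt_0_iff by fastforce+
  moreover have "\<bar>dhat N q D J t - D j t\<bar> \<le> 2 * M" if "j \<in> J" for j
    using abs_dhat_sub_le[of J N q D t c M] assms that by fastforce
  ultimately show ?thesis unfolding piJ_def by (subst Max_le_iff) auto
qed

lemma exists_subset_avoiding:
  assumes "W \<subseteq> {1..N}" "card W \<le> q"
  obtains J where "J \<subseteq> {1..N} - W" "card J = N - q"
proof -
  have "card ({1..N} - W) = N - card W"
    using assms(1) by (simp add: card_Diff_subset finite_subset)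
  then have "N - q \<le> card ({1..N} - W)" using assms(2) by simp
  then show ?thesis using that by (meson obtain_subset_with_card_n)
qed

lemma exists_outside_small_set:
  assumes "finite W" "card W \<le> q" "card S = N - q" "2 * q < N"
  obtains j where "j \<in> S" "j \<notin> W"
proof -
  have "card S - card W \<le> card (S - W)" by (rule diff_card_le_card_Diff[OF assms(1)])
  then have "card (S - W) > 0" using assms(2-4) by linarith
  then show ?thesis using that by (metis Diff_iff card_gt_0_iff ex_in_conv)
qed

theorem theorem2:
  fixes N q :: nat
    and d :: "real \<Rightarrow> real"
    and nu :: "nat \<Rightarrow> real \<Rightarrow> real"
    and eta :: "real \<Rightarrow> nat \<Rightarrow> real"
    and sigma :: "real \<Rightarrow> nat set"
  assumes "N \<ge> 1" and "2 * q < N"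
    and nu_bdd: "\<forall>j\<in>{1..N}. bounded ((\<lambda>t. nu j t) ` {0..})"
    and eta_sparse: "\<forall>t\<ge>0. \<exists>W. W \<subseteq> {1..N} \<and> card W \<le> q \<and> supp_vec N (eta t) \<subseteq> W"
    and sigma_card: "\<forall>t\<ge>0. sigma t \<subseteq> {1..N} \<and> card (sigma t) = N - q"
    and sigma_min: "\<forall>t\<ge>0. \<forall>J. J \<subseteq> {1..N} \<and> card J = N - q \<longrightarrow>
        piJ N q (meas d nu eta) (sigma t) t \<le> piJ N q (meas d nu eta) J t"
  shows "\<forall>t\<ge>0. \<bar>dhat N q (meas d nu eta) (sigma t) t - d t\<bar> \<le> 3 * nu_norm N nu"
proof (intro allI impI)
  fix t :: real assume t: "t \<ge> 0"
  let ?D = "meas d nu eta" and ?M = "nu_norm N nu"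
  obtain W where W: "W \<subseteq> {1..N}" "card W \<le> q" "supp_vec N (eta t) \<subseteq> W"
    using eta_sparse t by blast
  have honest: "\<bar>?D j t - d t\<bar> \<le> ?M" if "j \<in> {1..N} - W" for j
    using that W(3) abs_le_nu_norm[OF _ _ t] nu_bdd by (auto simp: meas_def supp_vec_def)
  have pos: "N - q > 0" using \<open>2 * q < N\<close> by simp
  obtain J0 where J0: "J0 \<subseteq> {1..N} - W" "card J0 = N - q"
    using exists_subset_avoiding[OF W(1,2)] .
  have "piJ N q ?D (sigma t) t \<le> piJ N q ?D J0 t"
    using sigma_min t J0 by blast
  also have "\<dots> \<le> 2 * ?M"
    using J0 honest by (intro piJ_le_twice[OF J0(2) pos, of _ _ "d t"]) auto
  finally have pi_sigma: "piJ N q ?D (sigma t) t \<le> 2 * ?M" .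
  have "finite W" using W(1) finite_subset by blast
  then obtain j where j: "j \<in> sigma t" "j \<notin> W"
    using exists_outside_small_set W(2) sigma_card t \<open>2 * q < N\<close> by blast
  have "\<bar>dhat N q ?D (sigma t) t - ?D j t\<bar> \<le> 2 * ?M"
    using abs_dhat_sub_le_piJ[of "sigma t" j] j(1) sigma_card t pi_sigma
    by (meson finite_subset finite_atLeastAtMost order_trans)
  moreover have "\<bar>?D j t - d t\<bar> \<le> ?M" using honest j sigma_card t by blast
  ultimately show "\<bar>dhat N q ?D (sigma t) t - d t\<bar> \<le> 3 * ?M" by linarith
qed

end
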